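(* In the FitzHugh–Nagumo setup, suppose $0<\epsilon<\frac{c^4}{16}$. Let $\lambda\ge0$ be a real eigenvalue of $L_\epsilon$ and $P=(p,q)$ a corresponding nonzero real-valued eigenfunction. Then $$\int_{-\infty}^{\infty}e^{cz}\Big(p(z)^2-\frac{q(z)^2}{\epsilon}\Big)\,dz>0.$$
   Context: FitzHugh–Nagumo setup. Fix $0<a<1/2$, $\gamma>0$, $\epsilon>0$, and $g(u)=u(1-u)(u-a)$. Consider $u_t=u_{xx}+g(u)-v$, $v_t=v_{xx}+\epsilon(u-\gamma v)$. Let $c<0$ and let $(\hat u,\hat v)(z)$, $z=x-ct$, be a traveling pulse: a solution of $\hat u''+c\hat u'+g(\hat u)-\hat v=0$, $\hat v''+c\hat v'+\epsilon(\hat u-\gamma\hat v)=0$ tending to $0$ exponentially (with derivatives) as $z\to\pm\infty$. Linearized operator: $L_\epsilon=\partial_z^2+c\partial_z+\begin{pmatrix}g'(\hat u)&-1\\ \epsilon&-\epsilon\gamma\end{pmatrix}$; $\lambda$ is an eigenvalue if $L_\epsilon P=\lambda P$ has a nonzero bounded uniformly continuous solution $P$ (such eigenfunctions decay exponentially at both ends, fast enough that the integral above converges). *)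

theory Defs
  imports "HOL-Analysis.Analysis"
begin

definition fhn_g :: "real \<Rightarrow> real \<Rightarrow> real" where
  "fhn_g a u = u * (1 - u) * (u - a)"

definition fhn_pulse ::
  "real \<Rightarrow> real \<Rightarrow> real \<Rightarrow> real \<Rightarrow>
   (real \<Rightarrow> real) \<Rightarrow> (real \<Rightarrow> real) \<Rightarrow> (real \<Rightarrow> real) \<Rightarrow>
   (real \<Rightarrow> real) \<Rightarrow> (real \<Rightarrow> real) \<Rightarrow> (real \<Rightarrow> real) \<Rightarrow> bool" where
  "fhn_pulse a \<gamma> \<epsilon> c uh uh' uh'' vh vh' vh'' \<longleftrightarrow>
     (\<forall>z. (uh has_real_derivative uh' z) (at z)) \<and>
     (\<forall>z. (uh' has_real_derivative uh'' z) (at z)) \<and>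
     (\<forall>z. (vh has_real_derivative vh' z) (at z)) \<and>
     (\<forall>z. (vh' has_real_derivative vh'' z) (at z)) \<and>
     (\<forall>z. uh'' z + c * uh' z + fhn_g a (uh z) - vh z = 0) \<and>
     (\<forall>z. vh'' z + c * vh' z + \<epsilon> * (uh z - \<gamma> * vh z) = 0) \<and>
     (\<exists>C K. K > 0 \<and> (\<forall>z. \<bar>uh z\<bar> + \<bar>uh' z\<bar> + \<bar>vh z\<bar> + \<bar>vh' z\<bar>
                              \<le> C * exp (- K * \<bar>z\<bar>)))"

text \<open>(p,q) (with derivatives) is a bounded uniformly continuous nonzero real solution
  of L_eps P = lambda P, where
  L_eps = d^2/dz^2 + c d/dz + [[g'(uh), -1], [eps, -eps*gamma]].\<close>
definition fhn_eigenfunction ::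
  "real \<Rightarrow> real \<Rightarrow> real \<Rightarrow> real \<Rightarrow> (real \<Rightarrow> real) \<Rightarrow> real \<Rightarrow>
   (real \<Rightarrow> real) \<Rightarrow> (real \<Rightarrow> real) \<Rightarrow> (real \<Rightarrow> real) \<Rightarrow>
   (real \<Rightarrow> real) \<Rightarrow> (real \<Rightarrow> real) \<Rightarrow> (real \<Rightarrow> real) \<Rightarrow> bool" where
  "fhn_eigenfunction a \<gamma> \<epsilon> c uh lam p p' p'' q q' q'' \<longleftrightarrow>
     (\<forall>z. (p has_real_derivative p' z) (at z)) \<and>
     (\<forall>z. (p' has_real_derivative p'' z) (at z)) \<and>
     (\<forall>z. (q has_real_derivative q' z) (at z)) \<and>
     (\<forall>z. (q' has_real_derivative q'' z) (at z)) \<and>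
     (\<forall>z. p'' z + c * p' z + deriv (fhn_g a) (uh z) * p z - q z = lam * p z) \<and>
     (\<forall>z. q'' z + c * q' z + \<epsilon> * p z - \<epsilon> * \<gamma> * q z = lam * q z) \<and>
     bounded (range p) \<and> bounded (range q) \<and>
     uniformly_continuous_on UNIV p \<and> uniformly_continuous_on UNIV q \<and>
     (\<exists>z. p z \<noteq> 0 \<or> q z \<noteq> 0)"

end

theory Submission
  imports Defs "HOL-Real_Asymp.Real_Asymp"
begin

text \<open>
  Near \<open>z = -\<infinity>\<close> the pulse is close to \<open>0\<close>, where \<open>g'(0) = -a < 0\<close>; there the energy
  \<open>E = \<epsilon> p\<^sup>2 + q\<^sup>2\<close> of the eigenfunction satisfies \<open>E'' + c E' \<ge> 2\<delta> E\<close>, and comparison with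
  exponential solutions shows that the bounded function \<open>E\<close> decays like \<open>e\<^bsup>t z\<^esup>\<close> with
  \<open>t + c > 0\<close>. Since \<open>c < 0\<close>, the weighted squares \<open>e\<^bsup>c z\<^esup> p\<^sup>2\<close> and \<open>e\<^bsup>c z\<^esup> q\<^sup>2\<close> are therefore
  integrable. Multiplying the \<open>q\<close>-equation by \<open>e\<^bsup>c z\<^esup> q\<close> and integrating (the flux
  \<open>e\<^bsup>c z\<^esup> (q q' + c q\<^sup>2 / 2)\<close> has no net contribution) yields, after completing a square,
  \<open>(c\<^sup>2/4)\<^sup>2 \<integral> e\<^bsup>c z\<^esup> q\<^sup>2 \<le> \<epsilon>\<^sup>2 \<integral> e\<^bsup>c z\<^esup> p\<^sup>2\<close>; with \<open>\<epsilon> < c\<^sup>4/16\<close> this gives the claim.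
\<close>

section \<open>Integrals on the real line\<close>

lemma integrable_exp_neg_abs:
  fixes k :: real
  assumes k: "k > 0"
  shows "integrable lborel (\<lambda>x. exp (- k * \<bar>x\<bar>))"
proof -
  let ?g = "\<lambda>x::real. indicator {0..} x *\<^sub>R exp (- k * x)"
  have "(\<lambda>x. exp (- k * x)) absolutely_integrable_on {0..}"
    by (intro nonnegative_absolutely_integrable_1 integrable_on_exp_minus_to_infinity k) auto
  then have "integrable lebesgue ?g" unfolding set_integrable_def .
  then have g: "integrable lborel ?g"
    by (subst (asm) integrable_completion)
       (auto intro!: borel_measurable_continuous_on_indicator continuous_intros)
  have "integrable lborel (\<lambda>x. ?g x + ?g (0 + (-1) * x))"
    using g lborel_integrable_real_affine[OF g, of "-1" 0] by (rule Bochner_Integration.integrable_add) simp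
  then show ?thesis
  proof (rule Bochner_Integration.integrable_bound)
    show "(\<lambda>x. exp (- k * \<bar>x\<bar>)) \<in> borel_measurable lborel"
      by (auto intro!: borel_measurable_continuous_onI continuous_intros)
    show "AE x in lborel. norm (exp (- k * \<bar>x\<bar>)) \<le> norm (?g x + ?g (0 + (-1) * x))"
      by (auto simp: indicator_def)
  qed
qed

lemma integrable_exp_decay:
  fixes f :: "real \<Rightarrow> real"
  assumes "f \<in> borel_measurable lborel" "k > 0" "\<And>x. \<bar>f x\<bar> \<le> M * exp (- k * \<bar>x\<bar>)"
  shows "integrable lborel f"
  using integrable_mult_right[OF integrable_exp_neg_abs[OF assms(2)], of M] assms(1)
proof (rule Bochner_Integration.integrable_bound)
  show "AE x in lborel. norm (f x) \<le> norm (M * exp (- k * \<bar>x\<bar>))"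
    using assms(3) by (auto intro!: AE_I2 order_trans[OF _ abs_ge_self])
qed

lemma tendsto_zero_exp_decay:
  fixes f :: "real \<Rightarrow> real"
  assumes k: "k > 0" and f: "\<And>x. \<bar>f x\<bar> \<le> M * exp (- k * \<bar>x\<bar>)"
  shows "(f \<longlongrightarrow> 0) at_top" "(f \<longlongrightarrow> 0) at_bot"
proof -
  have bound: "\<forall>x. norm (f x) \<le> M * exp (- k * \<bar>x\<bar>)" using f by simp
  have "((\<lambda>x. M * exp (- k * \<bar>x\<bar>)) \<longlongrightarrow> 0) at_top" using k by real_asymp
  then show "(f \<longlongrightarrow> 0) at_top" by (rule Lim_null_comparison[OF always_eventually[OF bound]])
  have "((\<lambda>x. M * exp (- k * \<bar>x\<bar>)) \<longlongrightarrow> 0) at_bot" using k by real_asymp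
  then show "(f \<longlongrightarrow> 0) at_bot" by (rule Lim_null_comparison[OF always_eventually[OF bound]])
qed

lemma integral_pos_continuous_nonneg:
  fixes h :: "real \<Rightarrow> real"
  assumes cont: "continuous_on UNIV h" and nonneg: "\<And>x. 0 \<le> h x"
    and int: "integrable lborel h" and pos: "h x0 > 0"
  shows "integral\<^sup>L lborel h > 0"
proof -
  have "isCont h x0" using cont by (simp add: continuous_on_eq_continuous_at)
  then obtain d where d: "d > 0" and near: "\<And>y. dist y x0 < d \<Longrightarrow> dist (h y) (h x0) < h x0 / 2"
    using pos unfolding continuous_at_eps_delta by (metis half_gt_zero)
  let ?I = "{x0 - d/2 .. x0 + d/2}"
  have lower: "h x0 / 2 * indicator ?I x \<le> h x" for x
  proof (cases "x \<in> ?I")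
    case True
    then have "dist x x0 < d" using d by (auto simp: dist_real_def)
    from near[OF this] have "h x > h x0 / 2" unfolding dist_real_def by linarith
    then show ?thesis using True by simp
  qed (use nonneg in simp)
  have "integrable lborel (\<lambda>x. indicator ?I x :: real)"
    using d by (intro integrable_real_indicator) (auto simp: emeasure_lborel_Icc)
  then have "integral\<^sup>L lborel (\<lambda>x. h x0 / 2 * indicator ?I x) \<le> integral\<^sup>L lborel h"
    by (intro integral_mono int lower Bochner_Integration.integrable_mult_right)
  moreover have "integral\<^sup>L lborel (\<lambda>x. h x0 / 2 * indicator ?I x) = h x0 / 2 * d"
    using d by simp
  moreover have "h x0 / 2 * d > 0" using pos d by simp
  ultimately show ?thesis by linarith
qed

section \<open>A maximum principle and decay of subsolutions\<close>

lemma maximum_principle_Icc: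
  fixes w w' w'' :: "real \<Rightarrow> real"
  assumes w: "\<And>z. (w has_real_derivative w' z) (at z)"
    and w': "\<And>z. (w' has_real_derivative w'' z) (at z)"
    and d: "d > 0" and sub: "\<And>z. T \<le> z \<Longrightarrow> z \<le> Z \<Longrightarrow> d * w z \<le> w'' z + c * w' z"
    and "w T \<le> 0" "w Z \<le> 0" and z: "T \<le> z" "z \<le> Z"
  shows "w z \<le> 0"
proof (rule ccontr)
  assume "\<not> w z \<le> 0"
  have "continuous_on {T..Z} w"
    using w by (meson DERIV_isCont continuous_at_imp_continuous_on)
  moreover have "{T..Z} \<noteq> {}" using z by simp
  ultimately obtain x where x: "x \<in> {T..Z}" and max: "\<And>y. y \<in> {T..Z} \<Longrightarrow> w y \<le> w x"
    using continuous_attains_sup[OF compact_Icc] by blast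
  have "w x > 0" using max[of z] z \<open>\<not> w z \<le> 0\<close> by auto
  then have "x \<noteq> T" "x \<noteq> Z" using \<open>w T \<le> 0\<close> \<open>w Z \<le> 0\<close> by auto
  then have x_interior: "T < x" "x < Z" using x by auto
  have "w' x = 0"
    using x_interior
    by (intro DERIV_local_max[OF w, of "min (x - T) (Z - x)"]) (auto intro!: max)
  moreover have "0 < d * w x" using d \<open>w x > 0\<close> by simp
  ultimately have "w'' x > 0" using sub[of x] x_interior by simp
  \<comment> \<open>so w' increases through 0 at the interior maximum x, and w increases just to the right of x\<close>
  then obtain e where e: "e > 0" and w'_pos: "\<And>h. 0 < h \<Longrightarrow> h < e \<Longrightarrow> 0 < w' (x + h)"
    using DERIV_pos_inc_right[OF w'[of x]] \<open>w' x = 0\<close> by metis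
  define h where "h = min (e / 2) ((Z - x) / 2)"
  have h: "0 < h" "h < e" "x + h \<le> Z" using e x_interior by (auto simp: h_def min_def field_simps)
  obtain \<xi> where "x < \<xi>" "\<xi> < x + h" and "w (x + h) - w x = h * w' \<xi>"
    using MVT2[of x "x + h" w w'] w h by auto
  moreover have "0 < w' \<xi>" using w'_pos[of "\<xi> - x"] \<open>x < \<xi>\<close> \<open>\<xi> < x + h\<close> h by simp
  ultimately have "w (x + h) > w x" using h by (simp add: algebra_simps)
  moreover have "w (x + h) \<le> w x" using max[of "x + h"] h x_interior by auto
  ultimately show False by simp
qed

lemma exp_neg_slope_ge:
  fixes s :: real
  assumes "s < 0" "\<eta> > 0"
  obtains T where "T \<le> z" "B \<le> \<eta> * exp (s * (T - Z))"
proof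
  define T where "T = min z (Z + ln (\<bar>B\<bar> / \<eta> + 1) / s)"
  show "T \<le> z" by (simp add: T_def)
  have "T - Z \<le> ln (\<bar>B\<bar> / \<eta> + 1) / s" by (simp add: T_def)
  then have "ln (\<bar>B\<bar> / \<eta> + 1) \<le> s * (T - Z)"
    using assms(1) by (simp add: neg_le_divide_eq mult.commute)
  moreover have "exp (ln (\<bar>B\<bar> / \<eta> + 1)) = \<bar>B\<bar> / \<eta> + 1"
    using assms(2) by (intro exp_ln) (simp add: add_nonneg_pos)
  ultimately have "\<bar>B\<bar> / \<eta> + 1 \<le> exp (s * (T - Z))"
    by (metis exp_le_cancel_iff)
  then have "\<eta> * (\<bar>B\<bar> / \<eta> + 1) \<le> \<eta> * exp (s * (T - Z))"
    using assms(2) by simp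
  then have "\<bar>B\<bar> + \<eta> \<le> \<eta> * exp (s * (T - Z))"
    using assms(2) by (simp add: distrib_left)
  then show "B \<le> \<eta> * exp (s * (T - Z))"
    using abs_ge_self[of B] assms(2) by linarith
qed

lemma bounded_subsolution_le_exp_sum:
  fixes E E' E'' :: "real \<Rightarrow> real"
  assumes E: "\<And>z. (E has_real_derivative E' z) (at z)"
    and E': "\<And>z. (E' has_real_derivative E'' z) (at z)"
    and bounded: "\<And>z. E z \<le> B" and E_Z: "0 \<le> E Z" and d: "d > 0"
    and sub: "\<And>z. z \<le> Z \<Longrightarrow> d * E z \<le> E'' z + c * E' z"
    and t: "t\<^sup>2 + c * t = d" and s: "s\<^sup>2 + c * s = d" "s < 0"
    and \<eta>: "\<eta> > 0" and z: "z \<le> Z"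
  shows "E z \<le> E Z * exp (t * (z - Z)) + \<eta> * exp (s * (z - Z))"
proof -
  define \<phi> where "\<phi> y = E Z * exp (t * (y - Z)) + \<eta> * exp (s * (y - Z))" for y
  define \<phi>' where "\<phi>' y = E Z * (t * exp (t * (y - Z))) + \<eta> * (s * exp (s * (y - Z)))" for y
  define \<phi>'' where "\<phi>'' y = E Z * (t * (t * exp (t * (y - Z)))) + \<eta> * (s * (s * exp (s * (y - Z))))" for y
  have \<phi>: "(\<phi> has_real_derivative \<phi>' y) (at y)" "(\<phi>' has_real_derivative \<phi>'' y) (at y)" for y
    unfolding \<phi>_def[abs_def] \<phi>'_def[abs_def] \<phi>''_def by (auto intro!: derivative_eq_intros)
  have \<phi>_eq: "\<phi>'' y + c * \<phi>' y = d * \<phi> y" for y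
  proof -
    have "\<phi>'' y + c * \<phi>' y
        = E Z * exp (t * (y - Z)) * (t\<^sup>2 + c * t) + \<eta> * exp (s * (y - Z)) * (s\<^sup>2 + c * s)"
      unfolding \<phi>''_def \<phi>'_def by (simp add: power2_eq_square algebra_simps)
    then show ?thesis unfolding t s \<phi>_def by (simp add: algebra_simps)
  qed
  obtain T where "T \<le> z" and "B \<le> \<eta> * exp (s * (T - Z))"
    using exp_neg_slope_ge[OF \<open>s < 0\<close> \<eta>] by blast
  then have "E T - \<phi> T \<le> 0"
    using bounded[of T] E_Z by (simp add: \<phi>_def add_increasing)
  have "E z - \<phi> z \<le> 0"
  proof (rule maximum_principle_Icc[where w = "\<lambda>y. E y - \<phi> y" and w' = "\<lambda>y. E' y - \<phi>' y"
        and w'' = "\<lambda>y. E'' y - \<phi>'' y" and T = T and Z = Z])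
    show "((\<lambda>y. E y - \<phi> y) has_real_derivative E' y - \<phi>' y) (at y)" for y
      using E \<phi>(1) by (rule DERIV_diff)
    show "((\<lambda>y. E' y - \<phi>' y) has_real_derivative E'' y - \<phi>'' y) (at y)" for y
      using E' \<phi>(2) by (rule DERIV_diff)
    show "d * (E y - \<phi> y) \<le> E'' y - \<phi>'' y + c * (E' y - \<phi>' y)" if "y \<le> Z" for y
      using sub[OF that] \<phi>_eq[of y] by (simp add: algebra_simps)
    show "E Z - \<phi> Z \<le> 0" using \<eta> by (simp add: \<phi>_def)
  qed (use d z \<open>T \<le> z\<close> \<open>E T - \<phi> T \<le> 0\<close> in auto)
  then show ?thesis by (simp add: \<phi>_def)
qed

lemma bounded_subsolution_exp_decay:
  fixes E E' E'' :: "real \<Rightarrow> real"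
  assumes E: "\<And>z. (E has_real_derivative E' z) (at z)"
    and E': "\<And>z. (E' has_real_derivative E'' z) (at z)"
    and bounded: "\<And>z. E z \<le> B" and E_Z: "0 \<le> E Z" and d: "d > 0"
    and sub: "\<And>z. z \<le> Z \<Longrightarrow> d * E z \<le> E'' z + c * E' z"
    and z: "z \<le> Z"
  shows "E z \<le> E Z * exp ((sqrt (c\<^sup>2 + 4 * d) - c) / 2 * (z - Z))"
proof -
  define r where "r = sqrt (c\<^sup>2 + 4 * d)"
  define t where "t = (r - c) / 2"
  define s where "s = (- r - c) / 2"
  have r: "r\<^sup>2 = c\<^sup>2 + 4 * d" "\<bar>c\<bar> < r"
    using d real_sqrt_less_mono[of "c\<^sup>2" "c\<^sup>2 + 4 * d"] by (auto simp: r_def)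
  have t: "t\<^sup>2 + c * t = d" and s: "s\<^sup>2 + c * s = d"
    using r(1) by (simp_all add: t_def s_def power2_eq_square field_simps)
  have "s < 0" using r(2) by (simp add: s_def)
  have "E z \<le> E Z * exp (t * (z - Z)) + e" if "e > 0" for e
    using bounded_subsolution_le_exp_sum[OF E E' bounded E_Z d sub t s \<open>s < 0\<close> _ z,
        of "e / exp (s * (z - Z))"] that by simp
  then show ?thesis unfolding t_def r_def by (rule field_le_epsilon)
qed

lemma exp_weighted_decay:
  fixes E :: "real \<Rightarrow> real" and c t :: real
  assumes c: "c < 0" and t: "t + c > 0"
    and nonneg: "\<And>z. 0 \<le> E z" and bounded: "\<And>z. E z \<le> B"
    and left: "\<And>z. z \<le> Z \<Longrightarrow> E z \<le> D * exp (t * z)"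
  shows "\<exists>M \<kappa>. \<kappa> > 0 \<and> (\<forall>z. exp (c * z) * E z \<le> M * exp (- \<kappa> * \<bar>z\<bar>))"
proof (intro exI conjI allI)
  define \<kappa> where "\<kappa> = min (t + c) (- c)"
  define Z' where "Z' = min Z 0"
  define M where "M = \<bar>D\<bar> + \<bar>B\<bar> * exp ((\<kappa> - c) * \<bar>Z'\<bar>)"
  show "\<kappa> > 0" using c t by (simp add: \<kappa>_def)
  fix z
  show "exp (c * z) * E z \<le> M * exp (- \<kappa> * \<bar>z\<bar>)"
  proof (cases "z \<le> Z'")
    case True
    then have "(t + c - \<kappa>) * z \<le> 0" by (intro mult_nonneg_nonpos) (auto simp: \<kappa>_def Z'_def)
    then have "(t + c) * z \<le> - \<kappa> * \<bar>z\<bar>" using True by (simp add: Z'_def algebra_simps)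
    have "exp (c * z) * E z \<le> exp (c * z) * (D * exp (t * z))"
      using left[of z] True by (simp add: Z'_def)
    also have "\<dots> = D * exp ((t + c) * z)" by (simp add: algebra_simps flip: exp_add)
    also have "\<dots> \<le> \<bar>D\<bar> * exp (- \<kappa> * \<bar>z\<bar>)"
      using \<open>(t + c) * z \<le> - \<kappa> * \<bar>z\<bar>\<close> by (intro mult_mono) auto
    also have "\<dots> \<le> M * exp (- \<kappa> * \<bar>z\<bar>)" by (simp add: M_def)
    finally show ?thesis .
  next
    case False
    have "c * z \<le> (\<kappa> - c) * \<bar>Z'\<bar> - \<kappa> * \<bar>z\<bar>"
    proof (cases "z \<ge> 0")
      case True
      have "(c + \<kappa>) * z \<le> 0" using True by (intro mult_nonpos_nonneg) (auto simp: \<kappa>_def)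
      moreover have "0 \<le> (\<kappa> - c) * \<bar>Z'\<bar>" using c t by (intro mult_nonneg_nonneg) (auto simp: \<kappa>_def)
      ultimately show ?thesis using True by (simp add: algebra_simps)
    next
      case negative: False
      have "(\<kappa> - c) * \<bar>z\<bar> \<le> (\<kappa> - c) * \<bar>Z'\<bar>"
        using False negative c t by (intro mult_left_mono) (auto simp: \<kappa>_def Z'_def)
      then show ?thesis using negative by (simp add: algebra_simps)
    qed
    have "exp (c * z) * E z \<le> exp (c * z) * \<bar>B\<bar>"
      using bounded[of z] by (intro mult_left_mono) auto
    also have "\<dots> \<le> exp ((\<kappa> - c) * \<bar>Z'\<bar> - \<kappa> * \<bar>z\<bar>) * \<bar>B\<bar>"
      using \<open>c * z \<le> _\<close> by (intro mult_right_mono) auto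
    also have "\<dots> = \<bar>B\<bar> * exp ((\<kappa> - c) * \<bar>Z'\<bar>) * exp (- \<kappa> * \<bar>z\<bar>)"
      by (simp add: exp_diff exp_add exp_minus field_simps)
    also have "\<dots> \<le> M * exp (- \<kappa> * \<bar>z\<bar>)" by (simp add: M_def)
    finally show ?thesis .
  qed
qed

lemma bounded_subsolution_weighted_decay:
  fixes E E' E'' :: "real \<Rightarrow> real"
  assumes E: "\<And>z. (E has_real_derivative E' z) (at z)" "\<And>z. (E' has_real_derivative E'' z) (at z)"
    and nonneg: "\<And>z. 0 \<le> E z" and bounded: "\<And>z. E z \<le> B" and d: "d > 0" and c: "c < 0"
    and sub: "\<And>z. z \<le> Z \<Longrightarrow> d * E z \<le> E'' z + c * E' z"
  shows "\<exists>M \<kappa>. \<kappa> > 0 \<and> (\<forall>z. exp (c * z) * E z \<le> M * exp (- \<kappa> * \<bar>z\<bar>))"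
proof -
  define t where "t = (sqrt (c\<^sup>2 + 4 * d) - c) / 2"
  have t: "t + c > 0"
    using real_sqrt_less_mono[of "c\<^sup>2" "c\<^sup>2 + 4 * d"] d c by (simp add: t_def field_simps)
  have left: "E z \<le> E Z * exp (- t * Z) * exp (t * z)" if "z \<le> Z" for z
  proof -
    have "E z \<le> E Z * exp (t * (z - Z))"
      using bounded_subsolution_exp_decay[OF E bounded nonneg d sub that] by (simp add: t_def)
    also have "\<dots> = E Z * exp (- t * Z) * exp (t * z)"
      by (simp add: right_diff_distrib exp_diff exp_minus field_simps)
    finally show ?thesis .
  qed
  show ?thesis
    using exp_weighted_decay[OF c t nonneg bounded left] .
qed

section \<open>The multiplier estimate\<close>

lemma set_integral_Icc_le_by_antiderivative:
  fixes f \<Phi> \<Phi>' :: "real \<Rightarrow> real"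
  assumes "integrable lborel f" "A \<le> B"
    and "\<And>x. (\<Phi> has_real_derivative \<Phi>' x) (at x)" "\<And>x. f x \<le> \<Phi>' x"
  shows "(LINT x:{A..B}|lborel. f x) \<le> \<Phi> B - \<Phi> A"
proof -
  have "set_integrable lborel {A..B} f"
    using assms(1) unfolding set_integrable_def by (intro integrable_mult_indicator) auto
  then have "(f has_integral (LINT x:{A..B}|lborel. f x)) {A..B}"
    using set_borel_integral_eq_integral by (metis has_integral_integral)
  moreover have "(\<Phi>' has_integral \<Phi> B - \<Phi> A) {A..B}"
    using assms(2,3) by (intro fundamental_theorem_of_calculus)
      (auto simp: has_real_derivative_iff_has_vector_derivative[symmetric] intro: DERIV_subset)
  ultimately show ?thesis
    using assms(4) by (rule has_integral_le)
qed

lemma set_integral_Icc_exhaust: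
  fixes f :: "real \<Rightarrow> real" and A B :: "nat \<Rightarrow> real"
  assumes "\<And>n. A (Suc n) \<le> A n" "\<And>n. B n \<le> B (Suc n)" "\<And>n. A n \<le> - real n" "\<And>n. real n \<le> B n"
    and f: "integrable lborel f"
  shows "(\<lambda>n. LINT x:{A n..B n}|lborel. f x) \<longlonglongrightarrow> integral\<^sup>L lborel f"
proof -
  have "(\<lambda>n. LINT x:{A n..B n}|lborel. f x) \<longlonglongrightarrow> (LINT x:\<Union>n. {A n..B n}|lborel. f x)"
  proof (rule set_integral_cont_up)
    show "incseq (\<lambda>n. {A n..B n})"
      using assms(1,2) by (intro incseq_SucI) auto
    show "set_integrable lborel (\<Union>n. {A n..B n}) f"
      using f unfolding set_integrable_def by (intro integrable_mult_indicator) auto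
  qed simp
  also have "(\<Union>n. {A n..B n}) = UNIV"
  proof -
    have "x \<in> {A (nat \<lceil>\<bar>x\<bar>\<rceil>)..B (nat \<lceil>\<bar>x\<bar>\<rceil>)}" for x
      using assms(3,4)[of "nat \<lceil>\<bar>x\<bar>\<rceil>"] by auto linarith+
    then show ?thesis by blast
  qed
  finally show ?thesis by (simp add: set_lebesgue_integral_def)
qed

lemma integral_le_zero_by_flux:
  fixes f \<Phi> \<Phi>' F :: "real \<Rightarrow> real"
  assumes f: "integrable lborel f"
    and \<Phi>: "\<And>x. (\<Phi> has_real_derivative \<Phi>' x) (at x)" and f_le: "\<And>x. f x \<le> \<Phi>' x"
    and F: "\<And>x. (F has_real_derivative \<Phi> x) (at x)"
    and F_top: "(F \<longlongrightarrow> 0) at_top" and F_bot: "(F \<longlongrightarrow> 0) at_bot"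
  shows "integral\<^sup>L lborel f \<le> 0"
proof -
  \<comment> \<open>\<Phi> need not vanish at infinity, but by the mean value theorem it takes the value
    of a difference of F on each unit interval, and these differences do vanish\<close>
  have "\<exists>\<xi>. - real (Suc n) < \<xi> \<and> \<xi> < - real n \<and> F (- real n) - F (- real (Suc n)) = \<Phi> \<xi>" for n
    using MVT2[of "- real (Suc n)" "- real n" F \<Phi>] F by auto
  then obtain A where A: "\<And>n. - real (Suc n) < A n \<and> A n < - real n \<and> \<Phi> (A n) = F (- real n) - F (- real (Suc n))"
    by metis
  have "\<exists>\<xi>. real n < \<xi> \<and> \<xi> < real (Suc n) \<and> F (real (Suc n)) - F (real n) = \<Phi> \<xi>" for n
    using MVT2[of "real n" "real (Suc n)" F \<Phi>] F by auto
  then obtain B where B: "\<And>n. real n < B n \<and> B n < real (Suc n) \<and> \<Phi> (B n) = F (real (Suc n)) - F (real n)"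
    by metis
  have F_seq_top: "(\<lambda>n. F (real n)) \<longlonglongrightarrow> 0"
    using filterlim_compose[OF F_top filterlim_real_sequentially] .
  have F_seq_bot: "(\<lambda>n. F (- real n)) \<longlonglongrightarrow> 0"
    using filterlim_compose[OF filterlim_compose[OF F_bot filterlim_uminus_at_bot_at_top]
        filterlim_real_sequentially] by simp
  have "(\<lambda>n. (F (real (Suc n)) - F (real n)) - (F (- real n) - F (- real (Suc n)))) \<longlonglongrightarrow> (0 - 0) - (0 - 0)"
    using F_seq_top F_seq_bot LIMSEQ_Suc[OF F_seq_top] LIMSEQ_Suc[OF F_seq_bot]
    by (intro tendsto_diff)
  then have flux_lim: "(\<lambda>n. \<Phi> (B n) - \<Phi> (A n)) \<longlonglongrightarrow> 0"
    using A B by simp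
  have "A (Suc n) \<le> A n" "B n \<le> B (Suc n)" "A n \<le> - real n" "real n \<le> B n" for n
    using A[of n] A[of "Suc n"] B[of n] B[of "Suc n"] by linarith+
  then have integral_lim: "(\<lambda>n. LINT x:{A n..B n}|lborel. f x) \<longlonglongrightarrow> integral\<^sup>L lborel f"
    using f by (rule set_integral_Icc_exhaust)
  have "(LINT x:{A n..B n}|lborel. f x) \<le> \<Phi> (B n) - \<Phi> (A n)" for n
    using A[of n] B[of n] by (intro set_integral_Icc_le_by_antiderivative[OF f _ \<Phi> f_le]) linarith
  then show ?thesis
    using LIMSEQ_le[OF integral_lim flux_lim] by blast
qed

lemma weighted_flux_has_derivative:
  fixes p q q' q'' :: "real \<Rightarrow> real"
  assumes q: "\<And>z. (q has_real_derivative q' z) (at z)"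
    and q': "\<And>z. (q' has_real_derivative q'' z) (at z)"
    and ode: "\<And>z. q'' z + c * q' z - \<mu> * q z = - \<epsilon> * p z"
  shows "((\<lambda>z. exp (c * z) * (q z * q' z + c / 2 * (q z)\<^sup>2)) has_real_derivative
          exp (c * z) * ((q' z + c / 2 * q z)\<^sup>2 + (c\<^sup>2 / 4 + \<mu>) * (q z)\<^sup>2 - \<epsilon> * p z * q z)) (at z)"
proof -
  have "((\<lambda>z. exp (c * z) * (q z * q' z + c / 2 * (q z)\<^sup>2)) has_real_derivative
      exp (c * z) * (c * q z * q' z + c\<^sup>2 / 2 * (q z)\<^sup>2 + (q' z)\<^sup>2 + q z * q'' z + c * q z * q' z)) (at z)"
    using q q' by (auto intro!: derivative_eq_intros simp: power2_eq_square algebra_simps)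
  moreover have "q'' z = \<mu> * q z - \<epsilon> * p z - c * q' z" using ode[of z] by simp
  ultimately show ?thesis by (simp add: power2_eq_square algebra_simps)
qed

lemma weighted_L2_estimate:
  fixes p q q' q'' :: "real \<Rightarrow> real" and c \<mu> \<epsilon> :: real
  assumes c: "c \<noteq> 0" and \<mu>: "\<mu> \<ge> 0"
    and q: "\<And>z. (q has_real_derivative q' z) (at z)"
    and q': "\<And>z. (q' has_real_derivative q'' z) (at z)"
    and ode: "\<And>z. q'' z + c * q' z - \<mu> * q z = - \<epsilon> * p z"
    and p_int: "integrable lborel (\<lambda>z. exp (c * z) * (p z)\<^sup>2)"
    and q_int: "integrable lborel (\<lambda>z. exp (c * z) * (q z)\<^sup>2)"
    and q_top: "((\<lambda>z. exp (c * z) * (q z)\<^sup>2) \<longlongrightarrow> 0) at_top"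
    and q_bot: "((\<lambda>z. exp (c * z) * (q z)\<^sup>2) \<longlongrightarrow> 0) at_bot"
  shows "(c\<^sup>2 / 4)\<^sup>2 * (\<integral>z. exp (c * z) * (q z)\<^sup>2 \<partial>lborel)
           \<le> \<epsilon>\<^sup>2 * (\<integral>z. exp (c * z) * (p z)\<^sup>2 \<partial>lborel)"
proof -
  define K where "K = c\<^sup>2 / 4"
  have K: "K > 0" using c by (simp add: K_def)
  define P where "P = (\<integral>z. exp (c * z) * (p z)\<^sup>2 \<partial>lborel)"
  define Q where "Q = (\<integral>z. exp (c * z) * (q z)\<^sup>2 \<partial>lborel)"
  define \<Phi> where "\<Phi> = (\<lambda>z. exp (c * z) * (q z * q' z + c / 2 * (q z)\<^sup>2))"
  define \<Phi>' where "\<Phi>' = (\<lambda>z. exp (c * z) * ((q' z + c / 2 * q z)\<^sup>2 + (K + \<mu>) * (q z)\<^sup>2 - \<epsilon> * p z * q z))"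
  have \<Phi>_deriv: "(\<Phi> has_real_derivative \<Phi>' z) (at z)" for z
    unfolding \<Phi>_def \<Phi>'_def K_def using q q' ode by (rule weighted_flux_has_derivative)
  have F_deriv: "((\<lambda>z. exp (c * z) * (q z)\<^sup>2 / 2) has_real_derivative \<Phi> z) (at z)" for z
    unfolding \<Phi>_def using q by (auto intro!: derivative_eq_intros simp: power2_eq_square algebra_simps)
  have lower: "K / 2 * (exp (c * z) * (q z)\<^sup>2) - \<epsilon>\<^sup>2 / (2 * K) * (exp (c * z) * (p z)\<^sup>2) \<le> \<Phi>' z" for z
  proof -
    have square: "(K * q z - \<epsilon> * p z)\<^sup>2 / (2 * K) = K / 2 * (q z)\<^sup>2 - \<epsilon> * p z * q z + \<epsilon>\<^sup>2 / (2 * K) * (p z)\<^sup>2"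
      using K by (simp add: field_simps power2_eq_square)
    have "\<Phi>' z - (K / 2 * (exp (c * z) * (q z)\<^sup>2) - \<epsilon>\<^sup>2 / (2 * K) * (exp (c * z) * (p z)\<^sup>2))
        = exp (c * z) * ((q' z + c / 2 * q z)\<^sup>2 + \<mu> * (q z)\<^sup>2 + (K * q z - \<epsilon> * p z)\<^sup>2 / (2 * K))"
      unfolding \<Phi>'_def square by (simp add: algebra_simps)
    also have "\<dots> \<ge> 0" using K \<mu> by (intro mult_nonneg_nonneg add_nonneg_nonneg) auto
    finally show ?thesis by simp
  qed
  have "(\<integral>z. K / 2 * (exp (c * z) * (q z)\<^sup>2) - \<epsilon>\<^sup>2 / (2 * K) * (exp (c * z) * (p z)\<^sup>2) \<partial>lborel) \<le> 0"
    using p_int q_int \<Phi>_deriv lower F_deriv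
      tendsto_divide_zero[OF q_top, of 2] tendsto_divide_zero[OF q_bot, of 2]
    by (intro integral_le_zero_by_flux) auto
  also have "(\<integral>z. K / 2 * (exp (c * z) * (q z)\<^sup>2) - \<epsilon>\<^sup>2 / (2 * K) * (exp (c * z) * (p z)\<^sup>2) \<partial>lborel)
      = K / 2 * Q - \<epsilon>\<^sup>2 / (2 * K) * P"
    unfolding P_def Q_def using p_int q_int by simp
  finally show ?thesis
    using K unfolding P_def[symmetric] Q_def[symmetric] K_def[symmetric]
    by (simp add: field_simps power2_eq_square)
qed

section \<open>The FitzHugh--Nagumo eigenvalue problem\<close>

lemma deriv_fhn_g: "deriv (fhn_g a) u = - 3 * u\<^sup>2 + 2 * (1 + a) * u - a"
proof (rule DERIV_imp_deriv)
  have "fhn_g a = (\<lambda>u. - (u ^ 3) + (1 + a) * u\<^sup>2 - a * u)"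
    by (auto simp: fhn_g_def fun_eq_iff algebra_simps power2_eq_square power3_eq_cube)
  then show "(fhn_g a has_real_derivative - 3 * u\<^sup>2 + 2 * (1 + a) * u - a) (at u)"
    by (auto intro!: derivative_eq_intros simp: power2_eq_square)
qed

lemma deriv_fhn_g_le_near_zero:
  assumes "0 < a" "a < 1/2" "\<bar>u\<bar> \<le> a / 6"
  shows "deriv (fhn_g a) u \<le> - a / 2"
proof -
  have "2 * (1 + a) * u \<le> 2 * (1 + a) * (a / 6)"
    using assms by (intro mult_left_mono) auto
  also have "\<dots> \<le> a / 2" using assms by (simp add: field_simps)
  finally show ?thesis unfolding deriv_fhn_g using zero_le_power2[of u] by linarith
qed

lemma fhn_pulse_small_at_bot:
  assumes "fhn_pulse a \<gamma> \<epsilon> c uh uh' uh'' vh vh' vh''" "r > 0"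
  shows "\<exists>Z. \<forall>z \<le> Z. \<bar>uh z\<bar> < r"
proof -
  from assms(1) obtain C K where "K > 0"
    and decay: "\<And>z. \<bar>uh z\<bar> + \<bar>uh' z\<bar> + \<bar>vh z\<bar> + \<bar>vh' z\<bar> \<le> C * exp (- K * \<bar>z\<bar>)"
    unfolding fhn_pulse_def by blast
  have "\<bar>uh z\<bar> \<le> C * exp (- K * \<bar>z\<bar>)" for z
    using decay[of z] abs_ge_zero[of "uh' z"] abs_ge_zero[of "vh z"] abs_ge_zero[of "vh' z"]
    by linarith
  with \<open>K > 0\<close> have "(uh \<longlongrightarrow> 0) at_bot" by (rule tendsto_zero_exp_decay)
  then have "\<forall>\<^sub>F z in at_bot. \<bar>uh z\<bar> < r"
    using assms(2) by (intro order_tendstoD(2)[OF tendsto_rabs_zero]) auto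
  then show ?thesis unfolding eventually_at_bot_linorder .
qed

lemma fhn_energy_inequality:
  fixes p p' p'' q q' q'' :: real
  assumes "p'' + c * p' + g * p - q = lam * p" "q'' + c * q' + \<epsilon> * p - \<epsilon> * \<gamma> * q = lam * q"
    and "\<epsilon> > 0" "\<delta> \<le> lam - g" "\<delta> \<le> lam + \<epsilon> * \<gamma>"
  shows "2 * \<delta> * (\<epsilon> * p\<^sup>2 + q\<^sup>2)
           \<le> 2 * \<epsilon> * (p'\<^sup>2 + p * p'') + 2 * (q'\<^sup>2 + q * q'') + c * (2 * \<epsilon> * p * p' + 2 * q * q')"
proof -
  have p: "p'' + c * p' = (lam - g) * p + q" and q: "q'' + c * q' = (lam + \<epsilon> * \<gamma>) * q - \<epsilon> * p"
    using assms(1,2) by (simp_all add: algebra_simps)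
  have "\<epsilon> * \<delta> * p\<^sup>2 \<le> \<epsilon> * (lam - g) * p\<^sup>2" "\<delta> * q\<^sup>2 \<le> (lam + \<epsilon> * \<gamma>) * q\<^sup>2"
    using assms(3-5) by (auto intro!: mult_right_mono)
  then have "2 * \<delta> * (\<epsilon> * p\<^sup>2 + q\<^sup>2) \<le> 2 * \<epsilon> * (lam - g) * p\<^sup>2 + 2 * (lam + \<epsilon> * \<gamma>) * q\<^sup>2"
    by (simp add: algebra_simps)
  also have "\<dots> \<le> 2 * \<epsilon> * p'\<^sup>2 + 2 * q'\<^sup>2 + 2 * \<epsilon> * (lam - g) * p\<^sup>2 + 2 * (lam + \<epsilon> * \<gamma>) * q\<^sup>2"
    using assms(3) by simp
  also have "\<dots> = 2 * \<epsilon> * p'\<^sup>2 + 2 * q'\<^sup>2 + 2 * \<epsilon> * p * (p'' + c * p') + 2 * q * (q'' + c * q')"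
    unfolding p q by (simp add: algebra_simps power2_eq_square)
  finally show ?thesis by (simp add: algebra_simps)
qed

lemma fhn_eigenfunction_weighted_decay:
  fixes uh uh' uh'' vh vh' vh'' p p' p'' q q' q'' :: "real \<Rightarrow> real"
  assumes a: "0 < a" "a < 1/2" and "\<gamma> > 0" "\<epsilon> > 0" "c < 0" "lam \<ge> 0"
    and pulse: "fhn_pulse a \<gamma> \<epsilon> c uh uh' uh'' vh vh' vh''"
    and eigen: "fhn_eigenfunction a \<gamma> \<epsilon> c uh lam p p' p'' q q' q''"
  shows "\<exists>M \<kappa>. \<kappa> > 0 \<and> (\<forall>z. exp (c * z) * (\<epsilon> * (p z)\<^sup>2 + (q z)\<^sup>2) \<le> M * exp (- \<kappa> * \<bar>z\<bar>))"
proof -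
  from eigen have
    p: "\<And>z. (p has_real_derivative p' z) (at z)" "\<And>z. (p' has_real_derivative p'' z) (at z)" and
    q: "\<And>z. (q has_real_derivative q' z) (at z)" "\<And>z. (q' has_real_derivative q'' z) (at z)" and
    ode_p: "\<And>z. p'' z + c * p' z + deriv (fhn_g a) (uh z) * p z - q z = lam * p z" and
    ode_q: "\<And>z. q'' z + c * q' z + \<epsilon> * p z - \<epsilon> * \<gamma> * q z = lam * q z" and
    "bounded (range p)" "bounded (range q)"
    unfolding fhn_eigenfunction_def by blast+
  obtain Bp Bq where Bp: "\<And>z. \<bar>p z\<bar> \<le> Bp" and Bq: "\<And>z. \<bar>q z\<bar> \<le> Bq"
    using \<open>bounded (range p)\<close> \<open>bounded (range q)\<close> unfolding bounded_iff by fastforce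
  obtain Z where small: "\<And>z. z \<le> Z \<Longrightarrow> \<bar>uh z\<bar> < a / 6"
    using fhn_pulse_small_at_bot[OF pulse, of "a / 6"] a by auto
  define \<delta> where "\<delta> = min (a / 2) (\<epsilon> * \<gamma>)"
  have "\<delta> > 0" using a assms by (simp add: \<delta>_def)
  define E where "E z = \<epsilon> * (p z)\<^sup>2 + (q z)\<^sup>2" for z
  define E' where "E' z = 2 * \<epsilon> * p z * p' z + 2 * q z * q' z" for z
  define E'' where "E'' z = 2 * \<epsilon> * ((p' z)\<^sup>2 + p z * p'' z) + 2 * ((q' z)\<^sup>2 + q z * q'' z)" for z
  have E: "(E has_real_derivative E' z) (at z)" "(E' has_real_derivative E'' z) (at z)" for z
    unfolding E_def[abs_def] E'_def[abs_def] E''_def using p q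
    by (auto intro!: derivative_eq_intros simp: power2_eq_square algebra_simps)
  have E_nonneg: "0 \<le> E z" for z using assms by (simp add: E_def)
  have E_bounded: "E z \<le> \<epsilon> * Bp\<^sup>2 + Bq\<^sup>2" for z
    unfolding E_def using power_mono[OF Bp[of z] abs_ge_zero, of 2] power_mono[OF Bq[of z] abs_ge_zero, of 2] assms
    by (intro add_mono mult_left_mono) (simp_all add: power2_abs)
  have sub: "2 * \<delta> * E z \<le> E'' z + c * E' z" if "z \<le> Z" for z
  proof -
    have "deriv (fhn_g a) (uh z) \<le> - a / 2"
      using small[OF that] a by (intro deriv_fhn_g_le_near_zero) auto
    then show ?thesis
      unfolding E_def E'_def E''_def using ode_p[of z] ode_q[of z] assms
      by (intro fhn_energy_inequality) (auto simp: \<delta>_def)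
  qed
  show ?thesis
    using bounded_subsolution_weighted_decay[OF E E_nonneg E_bounded _ \<open>c < 0\<close> sub] \<open>\<delta> > 0\<close>
    by (simp add: E_def)
qed

lemma fhn_eigenfunction_weighted_integrable:
  fixes uh uh' uh'' vh vh' vh'' p p' p'' q q' q'' :: "real \<Rightarrow> real"
  assumes "0 < a" "a < 1/2" "\<gamma> > 0" "\<epsilon> > 0" "c < 0" "lam \<ge> 0"
    and "fhn_pulse a \<gamma> \<epsilon> c uh uh' uh'' vh vh' vh''"
    and eigen: "fhn_eigenfunction a \<gamma> \<epsilon> c uh lam p p' p'' q q' q''"
  shows "integrable lborel (\<lambda>z. exp (c * z) * (p z)\<^sup>2)"
    and "integrable lborel (\<lambda>z. exp (c * z) * (q z)\<^sup>2)"
    and "((\<lambda>z. exp (c * z) * (q z)\<^sup>2) \<longlongrightarrow> 0) at_top"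
    and "((\<lambda>z. exp (c * z) * (q z)\<^sup>2) \<longlongrightarrow> 0) at_bot"
    and "(\<integral>z. exp (c * z) * (p z)\<^sup>2 \<partial>lborel) > 0 \<or> (\<integral>z. exp (c * z) * (q z)\<^sup>2 \<partial>lborel) > 0"
proof -
  obtain M \<kappa> where "\<kappa> > 0"
    and decay: "\<And>z. exp (c * z) * (\<epsilon> * (p z)\<^sup>2 + (q z)\<^sup>2) \<le> M * exp (- \<kappa> * \<bar>z\<bar>)"
    using fhn_eigenfunction_weighted_decay[OF assms] by blast
  define fp where "fp z = exp (c * z) * (p z)\<^sup>2" for z
  define fq where "fq z = exp (c * z) * (q z)\<^sup>2" for z
  have "continuous_on UNIV p" "continuous_on UNIV q"
    using eigen unfolding fhn_eigenfunction_def
    by (auto intro!: continuous_at_imp_continuous_on DERIV_isCont)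
  then have cont: "continuous_on UNIV fp" "continuous_on UNIV fq"
    unfolding fp_def[abs_def] fq_def[abs_def] by (auto intro!: continuous_intros)
  then have "fp \<in> borel_measurable lborel" "fq \<in> borel_measurable lborel"
    by (simp_all add: borel_measurable_continuous_onI)
  have nonneg: "0 \<le> fp z" "0 \<le> fq z" for z by (simp_all add: fp_def fq_def)
  have sum: "\<epsilon> * fp z + fq z \<le> M * exp (- \<kappa> * \<bar>z\<bar>)" for z
    using decay[of z] by (simp add: fp_def fq_def algebra_simps)
  have q_bound: "\<bar>fq z\<bar> \<le> M * exp (- \<kappa> * \<bar>z\<bar>)" for z
    using nonneg[of z] assms(4) by (intro order_trans[OF _ sum[of z]]) simp
  have p_bound: "\<bar>fp z\<bar> \<le> M / \<epsilon> * exp (- \<kappa> * \<bar>z\<bar>)" for z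
    using sum[of z] nonneg[of z] assms(4) by (simp add: field_simps)
  show integrable: "integrable lborel fp" "integrable lborel fq"
    using integrable_exp_decay \<open>fp \<in> _\<close> \<open>fq \<in> _\<close> \<open>\<kappa> > 0\<close> p_bound q_bound by blast+
  show "(fq \<longlongrightarrow> 0) at_top" "(fq \<longlongrightarrow> 0) at_bot"
    using tendsto_zero_exp_decay[OF \<open>\<kappa> > 0\<close> q_bound] by auto
  obtain z0 where "p z0 \<noteq> 0 \<or> q z0 \<noteq> 0"
    using eigen unfolding fhn_eigenfunction_def by blast
  then have "fp z0 > 0 \<or> fq z0 > 0" by (auto simp: fp_def fq_def)
  then show "integral\<^sup>L lborel fp > 0 \<or> integral\<^sup>L lborel fq > 0"
    using integral_pos_continuous_nonneg[OF cont(1) nonneg(1) integrable(1)]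
      integral_pos_continuous_nonneg[OF cont(2) nonneg(2) integrable(2)] by blast
qed

theorem theorem5p3:
  fixes a \<gamma> \<epsilon> c lam :: real
    and uh uh' uh'' vh vh' vh'' p p' p'' q q' q'' :: "real \<Rightarrow> real"
  assumes "0 < a" "a < 1/2" "\<gamma> > 0" "\<epsilon> > 0" "c < 0"
    and "\<epsilon> < c ^ 4 / 16"
    and "fhn_pulse a \<gamma> \<epsilon> c uh uh' uh'' vh vh' vh''"
    and "lam \<ge> 0"
    and "fhn_eigenfunction a \<gamma> \<epsilon> c uh lam p p' p'' q q' q''"
  shows "(\<integral>z. exp (c * z) * ((p z)\<^sup>2 - (q z)\<^sup>2 / \<epsilon>) \<partial>lborel) > 0"
proof -
  note weighted = fhn_eigenfunction_weighted_integrable[OF assms(1-5,8,7,9)]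
  define P where "P = (\<integral>z. exp (c * z) * (p z)\<^sup>2 \<partial>lborel)"
  define Q where "Q = (\<integral>z. exp (c * z) * (q z)\<^sup>2 \<partial>lborel)"
  from assms(9) have q: "\<And>z. (q has_real_derivative q' z) (at z)" "\<And>z. (q' has_real_derivative q'' z) (at z)"
    and ode_q: "\<And>z. q'' z + c * q' z - (\<epsilon> * \<gamma> + lam) * q z = - \<epsilon> * p z"
    unfolding fhn_eigenfunction_def by (auto simp: algebra_simps)
  define K where "K = (c\<^sup>2 / 4)\<^sup>2"
  have estimate: "K * Q \<le> \<epsilon>\<^sup>2 * P"
    unfolding K_def P_def Q_def using assms(3-5,8) ode_q weighted
    by (intro weighted_L2_estimate[where \<mu> = "\<epsilon> * \<gamma> + lam", OF _ _ q]) auto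
  have "\<epsilon> < K" using assms(6) by (simp add: K_def power2_eq_square power4_eq_xxxx)
  have "P > 0"
  proof (cases "Q > 0")
    case True
    then have "0 < K * Q" using \<open>\<epsilon> < K\<close> assms(4) by simp
    then have "0 < \<epsilon>\<^sup>2 * P" using estimate by linarith
    then show ?thesis using assms(4) by (simp add: zero_less_mult_iff)
  qed (use weighted(5) in \<open>simp add: P_def Q_def\<close>)
  have "K * (Q / \<epsilon>) \<le> \<epsilon> * P"
    using estimate assms(4) by (simp add: field_simps power2_eq_square)
  also have "\<dots> < K * P" using \<open>\<epsilon> < K\<close> \<open>P > 0\<close> by simp
  finally have "Q / \<epsilon> < P"
    by (rule mult_left_less_imp_less) (use \<open>\<epsilon> < K\<close> assms(4) in linarith)
  moreover have "(\<integral>z. exp (c * z) * ((p z)\<^sup>2 - (q z)\<^sup>2 / \<epsilon>) \<partial>lborel) = P - Q / \<epsilon>"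
    unfolding P_def Q_def using weighted(1,2) by (simp add: algebra_simps)
  ultimately show ?thesis by simp
qed

end
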